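(* Let $s\ge1$ and let $\vec M=(M_1,\dots,M_n)$ be positive integers with $2M_i+1\equiv0\pmod{p^s}$ for all $i$. Then for all positive integers $l$ and $t$ with $t\le s$, the vector $I^{[lp^t-1]}(z,\vec M)\in\mathbb Z[z]^n$ is a solution of the KZ system modulo $p^t$.
   Context: Let $p$ be an odd prime, $g\ge1$, $n=2g+1$, with $p>n$. Write $z=(z_1,\dots,z_n)$. For $1\le i\ne j\le n$ let $\Omega_{ij}$ be the $n\times n$ matrix whose $(i,i)$ and $(j,j)$ entries are $-1$, whose $(i,j)$ and $(j,i)$ entries are $1$, and all of whose other entries are $0$. The KZ system is the system for a column vector $I=(I_1,\dots,I_n)$ of functions of $z$: $\frac{\partial I}{\partial z_i}=\frac12\sum_{j\ne i}\frac{\Omega_{ij}}{z_i-z_j}\,I$ for $i=1,\dots,n$, together with $I_1+\dots+I_n=0$. For a positive integer $s$ let $\pi_s$ denote reduction modulo $p^s$. A vector $I(z)\in\mathbb Z[z]^n$ is a solution of the KZ system modulo $p^s$ if $\pi_s I\in(\mathbb Z/p^s\mathbb Z)[z]^n$ satisfies the KZ system (the differential equations being understood in $(\mathbb Z/p^s\mathbb Z)[z]$ after multiplying the $i$-th equation by $\prod_{j\ne i}(z_i-z_j)$). For $\vec M=(M_1,\dots,M_n)$ put $\Phi(x,z,\vec M)=\prod_{i=1}^n(x-z_i)^{M_i}$, expand $\Big(\frac{\Phi(x,z,\vec M)}{x-z_1},\dots,\frac{\Phi(x,z,\vec M)}{x-z_n}\Big)=\sum_i P^i(z,\vec M)x^i$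 with $P^i(z,\vec M)\in\mathbb Z[z]^n$, and set $I^{[m-1]}(z,\vec M)=P^{m-1}(z,\vec M)$ for positive integers $m$. *)

theory Defs
  imports "HOL-Library.Poly_Mapping" "HOL-Computational_Algebra.Polynomial"
begin

text \<open>Multivariate polynomials in z_1, z_2, ... with integer coefficients:
  a monomial is a finitely supported exponent vector (finitely supported nat-to-nat map).\<close>
type_synonym mpoly = "(nat \<Rightarrow>\<^sub>0 nat) \<Rightarrow>\<^sub>0 int"

definition zvar :: "nat \<Rightarrow> mpoly" where
  "zvar i = Poly_Mapping.single (Poly_Mapping.single i 1) 1"

definition pdiff :: "nat \<Rightarrow> mpoly \<Rightarrow> mpoly" where
  "pdiff i f = (\<Sum>m\<in>Poly_Mapping.keys f. Poly_Mapping.single (m - Poly_Mapping.single i (1::nat))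
                                 (of_nat (Poly_Mapping.lookup m i) * Poly_Mapping.lookup f m))"

definition cong_mp :: "int \<Rightarrow> mpoly \<Rightarrow> mpoly \<Rightarrow> bool" where
  "cong_mp q f g \<longleftrightarrow> (\<forall>m. q dvd Poly_Mapping.lookup (f - g) m)"

definition Omega :: "nat \<Rightarrow> nat \<Rightarrow> nat \<Rightarrow> nat \<Rightarrow> int" where
  "Omega i k a b =
     (if a = b \<and> (a = i \<or> a = k) then -1
      else if (a = i \<and> b = k) \<or> (a = k \<and> b = i) then 1 else 0)"

text \<open>I (components I_1..I_n, given as I 1, ..., I n) solves the KZ system modulo q:
  the i-th equation multiplied by prod_{k<>i}(z_i - z_k) (and by 2, the inverse of 1/2,
  which is a unit modulo q for odd q), together with I_1+...+I_n = 0.\<close>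
definition KZ_sol_mod :: "nat \<Rightarrow> int \<Rightarrow> (nat \<Rightarrow> mpoly) \<Rightarrow> bool" where
  "KZ_sol_mod n q I \<longleftrightarrow>
     (\<forall>i\<in>{1..n}. \<forall>a\<in>{1..n}.
        cong_mp q
          (2 * (\<Prod>k\<in>{1..n}-{i}. zvar i - zvar k) * pdiff i (I a))
          (\<Sum>k\<in>{1..n}-{i}. (\<Prod>l\<in>{1..n}-{i,k}. zvar i - zvar l) *
                (\<Sum>b\<in>{1..n}. of_int (Omega i k a b) * I b)))
     \<and> cong_mp q (\<Sum>a\<in>{1..n}. I a) 0"

text \<open>Phi(x,z,M)/(x - z_j) = prod_i (x - z_i)^(M_i - delta_ij), as a polynomial in x
  with coefficients in Z[z]; M_j \<ge> 1 is assumed where used.\<close>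
definition Phi_div :: "nat \<Rightarrow> (nat \<Rightarrow> nat) \<Rightarrow> nat \<Rightarrow> mpoly poly" where
  "Phi_div n M j = (\<Prod>i\<in>{1..n}. [:- zvar i, 1:] ^ (if i = j then M i - 1 else M i))"

text \<open>I^{[m-1]}(z,M): the coefficient of x^(m-1), component j.\<close>
definition Ivec :: "nat \<Rightarrow> (nat \<Rightarrow> nat) \<Rightarrow> nat \<Rightarrow> nat \<Rightarrow> mpoly" where
  "Ivec n M m j = coeff (Phi_div n M j) (m - 1)"

end

theory Submission
  imports Defs
begin

text \<open>
  Write \<open>\<Phi>\<^sub>j = \<Phi>/(x - z\<^sub>j)\<close> and \<open>I\<^sub>j\<close> for its coefficient of \<open>x\<^sup>m\<^sup>-\<^sup>1\<close>. Differentiating the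
  product gives \<open>\<partial>\<^sub>z\<^sub>i \<Phi>\<^sub>j = -(M\<^sub>i - \<delta>\<^sub>i\<^sub>j) \<Phi>\<^sub>j/(x - z\<^sub>i)\<close>, and
  \<open>\<Phi>\<^sub>i - \<Phi>\<^sub>k = (z\<^sub>i - z\<^sub>k) \<Phi>/((x - z\<^sub>i)(x - z\<^sub>k))\<close>. Substituting these, the two sides of each
  KZ equation differ by a combination of multiples of the numbers \<open>2M\<^sub>k + 1\<close> and of
  coefficients of \<open>x\<^sup>m\<^sup>-\<^sup>1\<close> in \<open>x\<close>-derivatives, which are \<open>m\<close> times coefficients of \<open>x\<^sup>m\<close>.
  The same holds for \<open>\<Sum>\<^sub>j I\<^sub>j = \<Sum>\<^sub>j (2M\<^sub>j + 1) I\<^sub>j - 2 \<Sum>\<^sub>j M\<^sub>j I\<^sub>j\<close>, as \<open>\<Sum>\<^sub>j M\<^sub>j I\<^sub>j\<close> is the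
  coefficient of \<open>x\<^sup>m\<^sup>-\<^sup>1\<close> in \<open>\<partial>\<^sub>x \<Phi>\<close>. So every modulus dividing \<open>m\<close> and all \<open>2M\<^sub>k + 1\<close>
  works, in particular \<open>p\<^sup>t\<close> for \<open>m = l p\<^sup>t\<close>.
\<close>

lemma pdiff_eq_sum_superset:
  assumes "finite S" "Poly_Mapping.keys f \<subseteq> S"
  shows "pdiff i f = (\<Sum>m\<in>S. Poly_Mapping.single (m - Poly_Mapping.single i 1)
                                 (of_nat (Poly_Mapping.lookup m i) * Poly_Mapping.lookup f m))"
  unfolding pdiff_def
  by (rule sum.mono_neutral_left) (use assms in \<open>auto simp: in_keys_iff\<close>)

lemma pdiff_0 [simp]: "pdiff i 0 = 0"
  by (simp add: pdiff_def)

lemma pdiff_add: "pdiff i (f + g) = pdiff i f + pdiff i g"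
proof -
  let ?S = "Poly_Mapping.keys f \<union> Poly_Mapping.keys g"
  have "pdiff i (f + g) = (\<Sum>m\<in>?S. Poly_Mapping.single (m - Poly_Mapping.single i 1)
                (of_nat (Poly_Mapping.lookup m i) * Poly_Mapping.lookup (f + g) m))"
    by (rule pdiff_eq_sum_superset) (simp_all add: keys_add)
  also have "\<dots> = pdiff i f + pdiff i g"
    by (simp add: pdiff_eq_sum_superset[of ?S f] pdiff_eq_sum_superset[of ?S g]
        lookup_add distrib_left single_add sum.distrib)
  finally show ?thesis .
qed

lemma pdiff_uminus: "pdiff i (- f) = - pdiff i f"
  unfolding pdiff_def by (simp add: single_uminus sum_negf)

lemma pdiff_sum: "pdiff i (sum h A) = (\<Sum>a\<in>A. pdiff i (h a))"
  by (induction A rule: infinite_finite_induct) (auto simp: pdiff_add)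

lemma pdiff_single:
  "pdiff i (Poly_Mapping.single m c) =
     Poly_Mapping.single (m - Poly_Mapping.single i 1) (of_nat (Poly_Mapping.lookup m i) * c)"
  by (cases "c = 0") (auto simp: pdiff_def)

lemma pdiff_1 [simp]: "pdiff i 1 = 0"
  using pdiff_single[of i 0 1] by simp

lemma pdiff_zvar: "pdiff i (zvar k) = (if k = i then 1 else 0)"
  by (auto simp: zvar_def pdiff_single lookup_single when_def)

lemma sum_single_lookup: "(\<Sum>m\<in>Poly_Mapping.keys f. Poly_Mapping.single m (Poly_Mapping.lookup f m)) = f"
  by (rule poly_mapping_eqI) (auto simp: lookup_sum lookup_single when_def in_keys_iff)

lemma diff_single_add_commute:
  fixes m :: "'a \<Rightarrow>\<^sub>0 nat"
  assumes "Poly_Mapping.lookup m i > 0"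
  shows "m - Poly_Mapping.single i 1 + m' = m + m' - Poly_Mapping.single i 1"
  by (rule poly_mapping_eqI) (use assms in \<open>auto simp: lookup_add lookup_minus lookup_single when_def\<close>)

lemma pdiff_single_mult_single:
  fixes a b :: int
  shows "pdiff i (Poly_Mapping.single m a * Poly_Mapping.single m' b) =
     pdiff i (Poly_Mapping.single m a) * Poly_Mapping.single m' b
     + Poly_Mapping.single m a * pdiff i (Poly_Mapping.single m' b)"
proof -
  let ?m = "m + m' - Poly_Mapping.single i 1"
  have left: "Poly_Mapping.single (m - Poly_Mapping.single i 1 + m') (int (Poly_Mapping.lookup m i) * a * b)
      = Poly_Mapping.single ?m (int (Poly_Mapping.lookup m i) * a * b)"
    using diff_single_add_commute[of m i m'] by (cases "Poly_Mapping.lookup m i = 0") auto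
  have right: "Poly_Mapping.single (m + (m' - Poly_Mapping.single i 1)) (a * (int (Poly_Mapping.lookup m' i) * b))
      = Poly_Mapping.single ?m (int (Poly_Mapping.lookup m' i) * a * b)"
    using diff_single_add_commute[of m' i m] by (cases "Poly_Mapping.lookup m' i = 0") (auto simp: ac_simps)
  show ?thesis
    by (simp only: pdiff_single mult_single left right lookup_add of_nat_add single_add[symmetric])
      (simp add: algebra_simps)
qed

lemma pdiff_mult: "pdiff i (f * g) = pdiff i f * g + f * pdiff i g"
proof -
  let ?mon = "\<lambda>h m. Poly_Mapping.single m (Poly_Mapping.lookup h m)"
  have "pdiff i ((\<Sum>m\<in>Poly_Mapping.keys f. ?mon f m) * (\<Sum>m'\<in>Poly_Mapping.keys g. ?mon g m'))
      = pdiff i (\<Sum>m\<in>Poly_Mapping.keys f. ?mon f m) * (\<Sum>m'\<in>Poly_Mapping.keys g. ?mon g m')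
        + (\<Sum>m\<in>Poly_Mapping.keys f. ?mon f m) * pdiff i (\<Sum>m'\<in>Poly_Mapping.keys g. ?mon g m')"
    by (simp add: sum_distrib_left sum_distrib_right pdiff_sum pdiff_single_mult_single sum.distrib)
  then show ?thesis
    by (simp only: sum_single_lookup)
qed

lemma derivation_prod_power:
  fixes D :: "'a::comm_ring_1 \<Rightarrow> 'a"
  assumes mult: "\<And>x y. D (x * y) = D x * y + x * D y" and "finite S"
  shows "D (\<Prod>k\<in>S. L k ^ e k) = (\<Sum>k\<in>S. of_nat (e k) * D (L k) * (\<Prod>l\<in>S. L l ^ (e(k := e k - 1)) l))"
proof -
  have D1: "D 1 = 0"
    using mult[of 1 1] by simp
  have Dpow: "D (x ^ n) = of_nat n * D x * x ^ (n - 1)" for x and n :: nat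
  proof (induction n)
    case 0
    then show ?case by (simp add: D1)
  next
    case (Suc n)
    then show ?case by (cases n) (simp_all add: mult algebra_simps)
  qed
  show ?thesis
    using \<open>finite S\<close>
  proof (induction S rule: finite_induct)
    case empty
    then show ?case by (simp add: D1)
  next
    case (insert a S)
    have upd_a: "(\<Prod>l\<in>insert a S. L l ^ (e(a := e a - 1)) l) = L a ^ (e a - 1) * (\<Prod>l\<in>S. L l ^ e l)"
    proof -
      have "(\<Prod>l\<in>S. L l ^ (e(a := e a - 1)) l) = (\<Prod>l\<in>S. L l ^ e l)"
        using insert(2) by (intro prod.cong) auto
      then show ?thesis using insert by simp
    qed
    have upd_k: "(\<Prod>l\<in>insert a S. L l ^ (e(k := e k - 1)) l) = L a ^ e a * (\<Prod>l\<in>S. L l ^ (e(k := e k - 1)) l)"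
      if "k \<in> S" for k
      using insert that by auto
    have "D (\<Prod>k\<in>insert a S. L k ^ e k) = D (L a ^ e a) * (\<Prod>k\<in>S. L k ^ e k) + L a ^ e a * D (\<Prod>k\<in>S. L k ^ e k)"
      using insert by (simp add: mult)
    also have "\<dots> = of_nat (e a) * D (L a) * (L a ^ (e a - 1) * (\<Prod>l\<in>S. L l ^ e l)) +
        (\<Sum>k\<in>S. of_nat (e k) * D (L k) * (L a ^ e a * (\<Prod>l\<in>S. L l ^ (e(k := e k - 1)) l)))"
      using insert by (simp only: Dpow) (simp add: sum_distrib_left algebra_simps del: fun_upd_apply)
    also have "\<dots> = (\<Sum>k\<in>insert a S. of_nat (e k) * D (L k) * (\<Prod>l\<in>insert a S. L l ^ (e(k := e k - 1)) l))"
      by (simp only: sum.insert[OF insert(1,2)] upd_a)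
        (rule arg_cong[where f = "\<lambda>x. _ + x"], rule sum.cong, simp_all only: upd_k)
    finally show ?case .
  qed
qed

definition zderiv :: "nat \<Rightarrow> mpoly poly \<Rightarrow> mpoly poly" where
  "zderiv i p = map_poly (pdiff i) p"

lemma coeff_zderiv: "coeff (zderiv i p) n = pdiff i (coeff p n)"
  unfolding zderiv_def by (simp add: coeff_map_poly)

lemma zderiv_mult: "zderiv i (p * q) = zderiv i p * q + p * zderiv i q"
  by (rule poly_eqI) (simp add: coeff_zderiv coeff_mult pdiff_sum pdiff_mult sum.distrib)

lemma zderiv_linear: "zderiv i [:- zvar k, 1:] = (if k = i then -1 else 0)"
proof (rule poly_eqI)
  show "coeff (zderiv i [:- zvar k, 1:]) n = coeff (if k = i then -1 else 0) n" for n
    by (cases n) (auto simp: coeff_zderiv coeff_pCons pdiff_uminus pdiff_zvar split: nat.split)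
qed

lemma coeff_of_nat_mult: "coeff (of_nat c * p) k = of_nat c * coeff p k"
  by (simp add: of_nat_poly)

lemma coeff_pderiv_pred: "m > 0 \<Longrightarrow> coeff (pderiv p) (m - 1) = of_nat m * coeff p m"
  by (simp add: coeff_pderiv)

definition lin_prod :: "nat \<Rightarrow> (nat \<Rightarrow> nat) \<Rightarrow> mpoly poly" where
  "lin_prod n e = (\<Prod>i\<in>{1..n}. [:- zvar i, 1:] ^ e i)"

lemma Ivec_eq_coeff_lin_prod: "Ivec n M m j = coeff (lin_prod n (M(j := M j - 1))) (m - 1)"
  unfolding Ivec_def Phi_div_def lin_prod_def by (intro arg_cong2[where f = coeff] prod.cong) auto

lemma zderiv_lin_prod:
  assumes "i \<in> {1..n}"
  shows "zderiv i (lin_prod n e) = - (of_nat (e i) * lin_prod n (e(i := e i - 1)))"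
proof -
  have "zderiv i (lin_prod n e)
      = (\<Sum>k\<in>{1..n}. of_nat (e k) * (if k = i then -1 else 0) * lin_prod n (e(k := e k - 1)))"
    unfolding lin_prod_def
    by (subst derivation_prod_power[where D = "zderiv i"]) (simp_all add: zderiv_mult zderiv_linear)
  also have "\<dots> = - (of_nat (e i) * lin_prod n (e(i := e i - 1)))"
    using assms by (subst sum.remove[of _ i]) (auto intro!: sum.neutral)
  finally show ?thesis .
qed

lemma pdiff_coeff_lin_prod:
  assumes "i \<in> {1..n}"
  shows "pdiff i (coeff (lin_prod n e) c) = - (of_nat (e i) * coeff (lin_prod n (e(i := e i - 1))) c)"
  by (simp only: coeff_zderiv[symmetric] zderiv_lin_prod[OF assms] coeff_minus coeff_of_nat_mult)

lemma pderiv_lin_prod: "pderiv (lin_prod n e) = (\<Sum>k\<in>{1..n}. of_nat (e k) * lin_prod n (e(k := e k - 1)))"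
  unfolding lin_prod_def
  by (subst derivation_prod_power[where D = pderiv]) (auto simp: pderiv_mult pderiv_pCons algebra_simps)

lemma lin_prod_extract_factor:
  assumes "j \<in> {1..n}" "e j > 0"
  shows "lin_prod n e = [:- zvar j, 1:] * lin_prod n (e(j := e j - 1))"
proof -
  let ?L = "\<lambda>i. [:- zvar i, 1:]" and ?N = "{1..n} - {j}"
  have rest: "(\<Prod>i\<in>?N. ?L i ^ (e(j := e j - 1)) i) = (\<Prod>i\<in>?N. ?L i ^ e i)"
    by (rule prod.cong) auto
  have "lin_prod n e = ?L j ^ Suc (e j - 1) * (\<Prod>i\<in>?N. ?L i ^ e i)"
    unfolding lin_prod_def using assms by (subst prod.remove[of _ j]) auto
  moreover have "lin_prod n (e(j := e j - 1)) = ?L j ^ (e j - 1) * (\<Prod>i\<in>?N. ?L i ^ e i)"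
    unfolding lin_prod_def using assms(1)
    by (subst prod.remove[of _ j]) (simp_all only: rest fun_upd_same finite_atLeastAtMost)
  ultimately show ?thesis by (simp only: power_Suc mult.assoc)
qed

lemma lookup_of_int_mult: "Poly_Mapping.lookup (of_int q * (h :: mpoly)) m = q * Poly_Mapping.lookup h m"
proof -
  have "(of_int q :: mpoly) * h = Poly_Mapping.map ((*) q) h"
    by (simp add: mult_map_scale_conv_mult single_of_int[symmetric] del: single_of_int)
  then show ?thesis by (simp add: Poly_Mapping.map.rep_eq when_def)
qed

lemma of_int_dvd_of_int: "x dvd y \<Longrightarrow> (of_int x :: 'a::comm_ring_1) dvd of_int y"
  by (auto elim!: dvdE)

lemma cong_mp_if_dvd: "(of_int q :: mpoly) dvd f - g \<Longrightarrow> cong_mp q f g"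
  unfolding cong_mp_def by (auto elim!: dvdE simp: lookup_of_int_mult)

lemma sum_Omega:
  fixes f :: "nat \<Rightarrow> 'a::comm_ring_1"
  assumes "finite N" "i \<in> N" "k \<in> N" "a \<in> N" "k \<noteq> i"
  shows "(\<Sum>b\<in>N. of_int (Omega i k a b) * f b)
       = (if a = i then f k - f i else if a = k then f i - f k else 0)"
proof -
  have "(\<Sum>b\<in>N. of_int (Omega i k a b) * f b)
      = (\<Sum>b\<in>N. (if b = a \<and> (a = i \<or> a = k) then - f a else 0)
               + (if a = i \<and> b = k \<or> a = k \<and> b = i then f b else 0))"
    using assms(5) by (intro sum.cong) (auto simp: Omega_def)
  also have "\<dots> = (if a = i then f k - f i else if a = k then f i - f k else 0)"
    using assms by (simp add: sum.distrib)
  finally show ?thesis .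
qed

locale KZ_modulus =
  fixes n m :: nat and M :: "nat \<Rightarrow> nat" and q :: int
  assumes M_pos: "k \<in> {1..n} \<Longrightarrow> M k > 0"
    and dvd_2M_Suc: "k \<in> {1..n} \<Longrightarrow> q dvd int (2 * M k + 1)"
    and dvd_m: "q dvd int m"
    and m_pos: "m > 0"
begin

definition Ivec2 :: "nat \<Rightarrow> nat \<Rightarrow> mpoly" where
  "Ivec2 i k = coeff (lin_prod n (M(i := M i - 1, k := M k - 1))) (m - 1)"

lemma dvd_2M_Suc_mpoly: "k \<in> {1..n} \<Longrightarrow> (of_int q :: mpoly) dvd 2 * of_nat (M k) + 1"
  using of_int_dvd_of_int[OF dvd_2M_Suc[of k], where 'a = mpoly] by (simp add: add.commute)

lemma dvd_m_mpoly: "(of_int q :: mpoly) dvd of_nat m"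
  using of_int_dvd_of_int[OF dvd_m, where 'a = mpoly] by simp

lemma Ivec_sum_cong: "cong_mp q (\<Sum>a\<in>{1..n}. Ivec n M m a) 0"
proof -
  have "of_nat m * coeff (lin_prod n M) m = (\<Sum>k\<in>{1..n}. of_nat (M k) * Ivec n M m k)"
    by (simp add: coeff_pderiv_pred[OF m_pos, symmetric] pderiv_lin_prod coeff_sum
        coeff_of_nat_mult Ivec_eq_coeff_lin_prod)
  then have "(\<Sum>a\<in>{1..n}. Ivec n M m a) - 0
      = (\<Sum>a\<in>{1..n}. (2 * of_nat (M a) + 1) * Ivec n M m a) - 2 * (of_nat m * coeff (lin_prod n M) m)"
    by (simp add: algebra_simps sum.distrib sum_distrib_left)
  also have "(of_int q :: mpoly) dvd \<dots>"
    by (intro dvd_diff dvd_sum dvd_mult2 dvd_mult dvd_2M_Suc_mpoly dvd_m_mpoly) simp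
  finally show ?thesis by (rule cong_mp_if_dvd)
qed

lemma Ivec_diff:
  assumes "i \<in> {1..n}" "k \<in> {1..n}" "k \<noteq> i"
  shows "Ivec n M m i - Ivec n M m k = (zvar i - zvar k) * Ivec2 i k"
proof -
  let ?R = "lin_prod n (M(i := M i - 1, k := M k - 1))"
  have "lin_prod n (M(i := M i - 1)) = [:- zvar k, 1:] * ?R"
    using lin_prod_extract_factor[of k n "M(i := M i - 1)"] assms M_pos by simp
  moreover have "lin_prod n (M(k := M k - 1))
      = [:- zvar i, 1:] * lin_prod n (M(k := M k - 1, i := M i - 1))"
    using lin_prod_extract_factor[of i n "M(k := M k - 1)"] assms M_pos by simp
  then have "lin_prod n (M(k := M k - 1)) = [:- zvar i, 1:] * ?R"
    by (subst (asm) fun_upd_twist[OF assms(3)])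
  moreover have "[:- zvar k, 1:] * ?R - [:- zvar i, 1:] * ?R = [:zvar i - zvar k:] * ?R"
    by (simp add: left_diff_distrib[symmetric] smult_diff_left)
  ultimately show ?thesis
    by (simp add: Ivec_eq_coeff_lin_prod Ivec2_def flip: coeff_diff)
qed

lemma pdiff_Ivec_other:
  assumes "i \<in> {1..n}" "a \<noteq> i"
  shows "pdiff i (Ivec n M m a) = - (of_nat (M i) * Ivec2 i a)"
proof -
  have "pdiff i (Ivec n M m a)
      = - (of_nat (M i) * coeff (lin_prod n (M(a := M a - 1, i := M i - 1))) (m - 1))"
    using assms by (simp add: Ivec_eq_coeff_lin_prod pdiff_coeff_lin_prod)
  then show ?thesis
    unfolding Ivec2_def by (subst (asm) fun_upd_twist[OF assms(2)])
qed

lemma pdiff_Ivec_same: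
  assumes "i \<in> {1..n}"
  shows "pdiff i (Ivec n M m i)
    = - (of_nat (M i - 1) * coeff (lin_prod n (M(i := M i - 2))) (m - 1))"
  using assms by (simp add: Ivec_eq_coeff_lin_prod pdiff_coeff_lin_prod numeral_2_eq_2)

lemma coeff_pderiv_lin_prod_diag:
  assumes "i \<in> {1..n}"
  shows "of_nat m * coeff (lin_prod n (M(i := M i - 1))) m
    = of_nat (M i - 1) * coeff (lin_prod n (M(i := M i - 2))) (m - 1)
      + (\<Sum>k\<in>{1..n} - {i}. of_nat (M k) * Ivec2 i k)"
proof -
  let ?e = "M(i := M i - 1)"
  have "of_nat m * coeff (lin_prod n ?e) m
      = (\<Sum>k\<in>{1..n}. of_nat (?e k) * coeff (lin_prod n (?e(k := ?e k - 1))) (m - 1))"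
    by (simp add: coeff_pderiv_pred[OF m_pos, symmetric] pderiv_lin_prod coeff_sum coeff_of_nat_mult
        del: fun_upd_apply)
  also have "\<dots> = of_nat (M i - 1) * coeff (lin_prod n (M(i := M i - 2))) (m - 1)
      + (\<Sum>k\<in>{1..n} - {i}. of_nat (M k) * Ivec2 i k)"
    using assms by (subst sum.remove[of _ i]) (auto simp: Ivec2_def numeral_2_eq_2 intro!: sum.cong)
  finally show ?thesis .
qed

lemma KZ_equation_cong:
  assumes i: "i \<in> {1..n}" and a: "a \<in> {1..n}"
  shows "cong_mp q (2 * (\<Prod>k\<in>{1..n} - {i}. zvar i - zvar k) * pdiff i (Ivec n M m a))
           (\<Sum>k\<in>{1..n} - {i}. (\<Prod>l\<in>{1..n} - {i, k}. zvar i - zvar l) *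
              (\<Sum>b\<in>{1..n}. of_int (Omega i k a b) * Ivec n M m b))"
proof -
  define P where "P = (\<Prod>k\<in>{1..n} - {i}. zvar i - zvar k)"
  define P' where "P' k = (\<Prod>l\<in>{1..n} - {i, k}. zvar i - zvar l)" for k
  let ?rhs = "\<Sum>k\<in>{1..n} - {i}. P' k * (\<Sum>b\<in>{1..n}. of_int (Omega i k a b) * Ivec n M m b)"
  have P_split: "P = (zvar i - zvar k) * P' k" if "k \<in> {1..n} - {i}" for k
  proof -
    have "{1..n} - {i} - {k} = {1..n} - {i, k}" by auto
    then show ?thesis
      unfolding P_def P'_def using that by (subst prod.remove[of _ k]) auto
  qed
  have Omega_term: "P' k * (\<Sum>b\<in>{1..n}. of_int (Omega i k a b) * Ivec n M m b)
      = (if a = i then - (P * Ivec2 i k) else if a = k then P * Ivec2 i a else 0)"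
    if k: "k \<in> {1..n} - {i}" for k
  proof -
    have k': "k \<in> {1..n}" "k \<noteq> i" using k by auto
    have "(\<Sum>b\<in>{1..n}. of_int (Omega i k a b) * Ivec n M m b)
        = (if a = i then - ((zvar i - zvar k) * Ivec2 i k) else if a = k then (zvar i - zvar k) * Ivec2 i k else 0)"
      using sum_Omega[of "{1..n}" i k a "Ivec n M m"] i a k' Ivec_diff[OF i k']
        minus_diff_eq[of "Ivec n M m i" "Ivec n M m k"] by simp
    then show ?thesis
      using P_split[OF k] by (cases "a = i"; cases "a = k") (simp_all add: mult.left_commute)
  qed
  show ?thesis
  proof (cases "a = i")
    case True
    define C where "C = coeff (lin_prod n (M(i := M i - 1))) m"
    define S where "S = (\<Sum>k\<in>{1..n} - {i}. of_nat (M k) * Ivec2 i k)"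
    define T where "T = (\<Sum>k\<in>{1..n} - {i}. Ivec2 i k)"
    have "?rhs = (\<Sum>k\<in>{1..n} - {i}. - (P * Ivec2 i k))"
      by (rule sum.cong[OF refl]) (metis Omega_term True)
    then have "?rhs = - (P * T)"
      by (simp add: T_def sum_distrib_left sum_negf)
    moreover have "2 * P * pdiff i (Ivec n M m a) = 2 * P * S - 2 * P * (of_nat m * C)"
      using True coeff_pderiv_lin_prod_diag[OF i]
      by (simp add: pdiff_Ivec_same[OF i] C_def S_def algebra_simps)
    moreover have "(\<Sum>k\<in>{1..n} - {i}. (2 * of_nat (M k) + 1) * Ivec2 i k) = 2 * S + T"
      by (simp add: S_def T_def distrib_right sum.distrib sum_distrib_left mult.assoc)
    ultimately have "2 * P * pdiff i (Ivec n M m a) - ?rhs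
        = P * (\<Sum>k\<in>{1..n} - {i}. (2 * of_nat (M k) + 1) * Ivec2 i k) - 2 * P * (of_nat m * C)"
      by (simp add: algebra_simps)
    also have "(of_int q :: mpoly) dvd \<dots>"
      by (intro dvd_diff dvd_mult dvd_sum dvd_mult2 dvd_2M_Suc_mpoly dvd_m_mpoly) auto
    finally show ?thesis
      unfolding P_def P'_def by (rule cong_mp_if_dvd)
  next
    case False
    have "?rhs = (\<Sum>k\<in>{1..n} - {i}. if a = k then P * Ivec2 i a else 0)"
      by (rule sum.cong[OF refl]) (subst Omega_term, simp_all add: False)
    also have "\<dots> = P * Ivec2 i a"
      using False a by simp
    finally have "?rhs = P * Ivec2 i a" .
    then have "2 * P * pdiff i (Ivec n M m a) - ?rhs = - ((2 * of_nat (M i) + 1) * (P * Ivec2 i a))"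
      using False by (simp add: pdiff_Ivec_other[OF i] algebra_simps)
    also have "(of_int q :: mpoly) dvd \<dots>"
      by (intro dvd_minus_iff[THEN iffD2] dvd_mult2 dvd_2M_Suc_mpoly i)
    finally show ?thesis
      unfolding P_def P'_def by (rule cong_mp_if_dvd)
  qed
qed

theorem KZ_sol_mod_Ivec: "KZ_sol_mod n q (Ivec n M m)"
  unfolding KZ_sol_mod_def using KZ_equation_cong Ivec_sum_cong by blast

end

theorem theorem5p1:
  fixes p g s l t :: nat and M :: "nat \<Rightarrow> nat"
  assumes "prime p" and "odd p" and "g \<ge> 1" and "p > 2 * g + 1"
    and "s \<ge> 1"
    and "\<forall>i\<in>{1..2 * g + 1}. M i > 0 \<and> p ^ s dvd 2 * M i + 1"
    and "l > 0" and "t > 0" and "t \<le> s"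
  shows "KZ_sol_mod (2 * g + 1) (int p ^ t) (Ivec (2 * g + 1) M (l * p ^ t))"
proof (rule KZ_modulus.KZ_sol_mod_Ivec, unfold_locales)
  have "p ^ t dvd p ^ s"
    using \<open>t \<le> s\<close> by (rule le_imp_power_dvd)
  then show "int p ^ t dvd int (2 * M k + 1)" if "k \<in> {1..2 * g + 1}" for k
    using assms(6) that by (metis dvd_trans of_nat_dvd_iff of_nat_power)
  show "0 < M k" if "k \<in> {1..2 * g + 1}" for k
    using assms(6) that by blast
  show "int p ^ t dvd int (l * p ^ t)"
    by simp
  show "0 < l * p ^ t"
    using \<open>l > 0\<close> \<open>prime p\<close> by (simp add: prime_gt_0_nat)
qed

end
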